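(* Let $B_k$ ($k\ge2$) be a generalized Bethe tree with parameters $n_1,\dots,n_k$ and $d_1,\dots,d_k$, let $\alpha\in[0,1)$ and $\beta=1-\alpha$. Let $T_k$ be the $k\times k$ symmetric tridiagonal matrix with diagonal entries $\alpha,\ \alpha d_2,\ \dots,\ \alpha d_k$, with $(s-1,s)$ and $(s,s-1)$ entries $\beta\sqrt{d_s-1}$ for $s=2,\dots,k-1$, and with $(k-1,k)$ and $(k,k-1)$ entries $\beta\sqrt{d_k}$; let $T_j$ be its $j\times j$ leading principal submatrix ($j=1,\dots,k$). Then: (1) as a multiset, the spectrum of $A_\alpha(B_k)$ is obtained by taking each eigenvalue of $T_j$ with multiplicity $n_j-n_{j+1}$ for $1\le j\le k-1$, and each eigenvalue of $T_k$ with multiplicity $1$, and forming the multiset union (multiplicities of equal eigenvalues arising from different $T_j$ being added); (2) the largest eigenvalue of $T_k$ equals the largest eigenvalue of $A_\alpha(B_k)$.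
   Context: For a graph $G$, $A(G)$ is the adjacency matrix, $D(G)$ the diagonal degree matrix, and $A_\alpha(G)=\alpha D(G)+(1-\alpha)A(G)$. In a rooted tree, the level of a vertex is its distance to the root plus one. A generalized Bethe tree $B_k$ is a rooted tree with $k$ levels in which all vertices at the same level have the same degree. For $j\in\{1,\dots,k\}$, $n_{k-j+1}$ denotes the number of vertices at level $j$ and $d_{k-j+1}$ their common degree (so index $1$ refers to the deepest level and index $k$ to the root; $d_1=1$, $n_k=1$). *)

theory Defs
  imports "HOL-Computational_Algebra.Polynomial" "Jordan_Normal_Form.Char_Poly"
begin

definition simple_graph :: "nat \<Rightarrow> (nat \<Rightarrow> nat \<Rightarrow> bool) \<Rightarrow> bool" where
  "simple_graph N E \<longleftrightarrow> (\<forall>u v. E u v \<longrightarrow> u < N \<and> v < N \<and> u \<noteq> v \<and> E v u)"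

definition is_walk :: "(nat \<Rightarrow> nat \<Rightarrow> bool) \<Rightarrow> nat list \<Rightarrow> bool" where
  "is_walk E xs \<longleftrightarrow> xs \<noteq> [] \<and> (\<forall>i. Suc i < length xs \<longrightarrow> E (xs ! i) (xs ! Suc i))"

definition connected_graph :: "nat \<Rightarrow> (nat \<Rightarrow> nat \<Rightarrow> bool) \<Rightarrow> bool" where
  "connected_graph N E \<longleftrightarrow>
     (\<forall>u<N. \<forall>v<N. \<exists>xs. is_walk E xs \<and> hd xs = u \<and> last xs = v)"

definition has_cycle :: "(nat \<Rightarrow> nat \<Rightarrow> bool) \<Rightarrow> bool" where
  "has_cycle E \<longleftrightarrow> (\<exists>xs. is_walk E xs \<and> length xs \<ge> 3 \<and> distinct xs \<and> E (last xs) (hd xs))"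

definition is_tree :: "nat \<Rightarrow> (nat \<Rightarrow> nat \<Rightarrow> bool) \<Rightarrow> bool" where
  "is_tree N E \<longleftrightarrow> N \<ge> 1 \<and> simple_graph N E \<and> connected_graph N E \<and> \<not> has_cycle E"

definition gdist :: "(nat \<Rightarrow> nat \<Rightarrow> bool) \<Rightarrow> nat \<Rightarrow> nat \<Rightarrow> nat" where
  "gdist E u v = (LEAST m. \<exists>xs. is_walk E xs \<and> hd xs = u \<and> last xs = v \<and> length xs = Suc m)"

definition level :: "(nat \<Rightarrow> nat \<Rightarrow> bool) \<Rightarrow> nat \<Rightarrow> nat \<Rightarrow> nat" where
  "level E r v = gdist E r v + 1"

definition degree :: "nat \<Rightarrow> (nat \<Rightarrow> nat \<Rightarrow> bool) \<Rightarrow> nat \<Rightarrow> nat" where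
  "degree N E v = card {u. u < N \<and> E v u}"

definition gen_bethe_tree :: "nat \<Rightarrow> (nat \<Rightarrow> nat \<Rightarrow> bool) \<Rightarrow> nat \<Rightarrow> nat \<Rightarrow> bool" where
  "gen_bethe_tree N E r k \<longleftrightarrow>
     is_tree N E \<and> r < N \<and>
     k = Max ((level E r) ` {..<N}) \<and>
     (\<forall>u<N. \<forall>v<N. level E r u = level E r v \<longrightarrow> degree N E u = degree N E v)"

definition adj_mat :: "nat \<Rightarrow> (nat \<Rightarrow> nat \<Rightarrow> bool) \<Rightarrow> real mat" where
  "adj_mat N E = mat N N (\<lambda>(u, v). if E u v then 1 else 0)"

definition deg_mat :: "nat \<Rightarrow> (nat \<Rightarrow> nat \<Rightarrow> bool) \<Rightarrow> real mat" where
  "deg_mat N E = mat N N (\<lambda>(u, v). if u = v then real (degree N E u) else 0)"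

definition A_alpha :: "real \<Rightarrow> nat \<Rightarrow> (nat \<Rightarrow> nat \<Rightarrow> bool) \<Rightarrow> real mat" where
  "A_alpha \<alpha> N E = \<alpha> \<cdot>\<^sub>m deg_mat N E + (1 - \<alpha>) \<cdot>\<^sub>m adj_mat N E"

definition spectrum_mset :: "real mat \<Rightarrow> real multiset" where
  "spectrum_mset M = proots (char_poly M)"

(* T_j: the j x j leading principal submatrix of the k x k symmetric tridiagonal
   matrix T_k (indices below are 0-based; 1-based index s corresponds to s-1). *)
definition T_mat :: "real \<Rightarrow> (nat \<Rightarrow> nat) \<Rightarrow> nat \<Rightarrow> nat \<Rightarrow> real mat" where
  "T_mat \<alpha> d k j = mat j j (\<lambda>(a, b).
     if a = b then (if a = 0 then \<alpha> else \<alpha> * real (d (a + 1)))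
     else if b = a + 1 \<or> a = b + 1 then
       (let s = max a b + 1 in
        if s = k then (1 - \<alpha>) * sqrt (real (d k))
        else (1 - \<alpha>) * sqrt (real (d s) - 1))
     else 0)"

end

theory Submission
  imports Defs
begin

text \<open>Order the vertices of x I - A_\<alpha> from the leaves up and eliminate each vertex into its
  parent. Since the tree has no other edges, this symmetric Gaussian elimination produces no
  fill-in, and by induction on the level all vertices at level s (counted from the leaves) get the
  same pivot F_s(x): F_1 = x - \<alpha> and
  F_(s+1) = x - \<alpha> d_(s+1) - (1 - \<alpha>)^2 c_(s+1) / F_s, with c_(s+1) the number of children.
  Eliminating the path T_k from its first vertex gives the very same pivots, so
  char T_j = F_1 \<cdots> F_j, while char A_\<alpha> = \<Prod>s F_s^(n_s); the latter telescopes into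
  \<Prod>j (char T_j)^(n_j - n_(j+1)) \<cdot> char T_k. These identities hold wherever no pivot
  vanishes, that is, for all but finitely many x, hence as polynomial identities. For the largest
  eigenvalue, the three-term recurrence
  char T_(j+1) = (x - \<alpha> d_(j+1)) char T_j - (1 - \<alpha>)^2 c_(j+1) char T_(j-1)
  shows that the largest root of char T_j increases with j.\<close>

lemma det_eq_prod_diag_if_graded:
  fixes A :: "'a::comm_ring_1 mat" and h :: "nat \<Rightarrow> 'b::linorder"
  assumes A: "A \<in> carrier_mat n n"
    and graded: "\<And>i j. i < n \<Longrightarrow> j < n \<Longrightarrow> i \<noteq> j \<Longrightarrow> A $$ (i, j) \<noteq> 0 \<Longrightarrow>
      h i < h j"
  shows "det A = (\<Prod>i<n. A $$ (i, i))"
proof -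
  have "(\<Prod>i = 0..<n. A $$ (i, p i)) = 0" if p: "p permutes {0..<n}" and "p \<noteq> id" for p
  proof (rule ccontr)
    assume "(\<Prod>i = 0..<n. A $$ (i, p i)) \<noteq> 0"
    then have nz: "A $$ (i, p i) \<noteq> 0" if "i < n" for i
      using that prod_zero[of "{0..<n}" "\<lambda>i. A $$ (i, p i)"]
      by (meson atLeastLessThan_iff finite_atLeastLessThan le0)
    define S where "S = {i. i < n \<and> p i \<noteq> i}"
    have "S \<noteq> {}"
      using \<open>p \<noteq> id\<close> permutes_not_in[OF p] unfolding S_def by fastforce
    moreover have "finite S"
      by (simp add: S_def)
    ultimately have "Max (h ` S) \<in> h ` S"
      by simp
    then obtain i where iS: "i \<in> S" and "h i = Max (h ` S)"
      by auto
    with \<open>finite S\<close> have imax: "h j \<le> h i" if "j \<in> S" for j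
      using that by simp
    have i: "i < n" "p i \<noteq> i" "p i < n"
      using iS permutes_in_image[OF p, of i] by (auto simp: S_def)
    then have "p i \<in> S"
      using permutes_inj[OF p] by (auto simp: S_def dest: injD)
    moreover have "h i < h (p i)"
      using graded[of i "p i"] i nz by auto
    ultimately show False
      using imax by fastforce
  qed
  then have "det A = signof (id :: nat \<Rightarrow> nat) * (\<Prod>i = 0..<n. A $$ (i, id i))"
    unfolding det_def'[OF A]
    by (subst sum.remove[of _ id]) (auto simp: finite_permutations permutes_id intro!: sum.neutral)
  then show ?thesis
    by (simp add: atLeast0LessThan)
qed

text \<open>M = U^T D U, where D = diag f and U is the unit matrix plus the entries
  U (i, par i) = M (i, par i) / f i; the height h makes U triangular up to reordering.\<close>

lemma det_tree_elimination:
  fixes M :: "'a::field mat" and f :: "nat \<Rightarrow> 'a" and par :: "nat \<Rightarrow> nat"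
    and h :: "nat \<Rightarrow> 'b::linorder"
  assumes M: "M \<in> carrier_mat n n"
    and sym: "\<And>i j. i < n \<Longrightarrow> j < n \<Longrightarrow> M $$ (i, j) = M $$ (j, i)"
    and par: "\<And>i. i < n \<Longrightarrow> par i \<noteq> i \<Longrightarrow> par i < n \<and> h i < h (par i)"
    and off_tree: "\<And>i j. i < n \<Longrightarrow> j < n \<Longrightarrow> i \<noteq> j \<Longrightarrow> j \<noteq> par i \<Longrightarrow> i \<noteq> par j \<Longrightarrow>
      M $$ (i, j) = 0"
    and f_nz: "\<And>i. i < n \<Longrightarrow> par i \<noteq> i \<Longrightarrow> f i \<noteq> 0"
    and diag: "\<And>v. v < n \<Longrightarrow>
      M $$ (v, v) = f v + (\<Sum>c | c < n \<and> par c \<noteq> c \<and> par c = v. M $$ (c, v)^2 / f c)"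
  shows "det M = (\<Prod>v<n. f v)"
proof -
  define child where "child c v \<longleftrightarrow> par c \<noteq> c \<and> par c = v" for c v
  define U where "U = mat n n (\<lambda>(i, j). if i = j then 1 else if child i j then M $$ (i, j) / f i else 0)"
  define D where "D = mat_diag n f"
  have U: "U \<in> carrier_mat n n" and D: "D \<in> carrier_mat n n"
    unfolding U_def D_def by auto
  have U_entry: "U $$ (i, j) = (if i = j then 1 else if child i j then M $$ (i, j) / f i else 0)"
    if "i < n" "j < n" for i j
    using that by (simp add: U_def)
  have diag_term: "U $$ (w, v) * (f w * U $$ (w, v)) =
      (if w = v then f w else 0) + (if child w v then M $$ (w, v)^2 / f w else 0)"
    if "w < n" "v < n" for w v
    using that f_nz by (auto simp: U_entry child_def power2_eq_square)
  have off_diag_term: "U $$ (w, u) * (f w * U $$ (w, v)) =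
      (if w = u then if child u v then M $$ (u, v) else 0 else 0)
    + (if w = v then if child v u then M $$ (v, u) else 0 else 0)"
    if "w < n" "u < n" "v < n" "u \<noteq> v" for w u v
    using that f_nz by (auto simp: U_entry child_def)
  have "M = transpose_mat U * (D * U)"
  proof (rule eq_matI)
    fix u v assume "u < dim_row (transpose_mat U * (D * U))" "v < dim_col (transpose_mat U * (D * U))"
    then have uv: "u < n" "v < n"
      using U by auto
    have "(transpose_mat U * (D * U)) $$ (u, v) = (\<Sum>w<n. U $$ (w, u) * (f w * U $$ (w, v)))"
      using uv U by (simp add: D_def mat_diag_mult_left[OF U] scalar_prod_def lessThan_atLeast0)
    also have "\<dots> = M $$ (u, v)"
    proof (cases "u = v")
      case True
      then show ?thesis
        using uv diag[of v] by (simp add: diag_term sum.distrib sum.inter_filter[symmetric] child_def)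
    next
      case False
      have "\<not> (child u v \<and> child v u)"
        using par[of u] par[of v] uv by (auto simp: child_def)
      then show ?thesis
        using False uv sym[of u v] off_tree[of u v]
        by (auto simp: off_diag_term sum.distrib child_def)
    qed
    finally show "M $$ (u, v) = (transpose_mat U * (D * U)) $$ (u, v)" ..
  qed (use U D M in auto)
  moreover have "det U = 1"
  proof -
    have "h i < h j" if "i < n" "j < n" "i \<noteq> j" "U $$ (i, j) \<noteq> 0" for i j
    proof -
      have "child i j"
        using that U_entry[of i j] by (auto split: if_splits)
      then show ?thesis
        using par[of i] that(1) by (simp add: child_def)
    qed
    then show ?thesis
      using det_eq_prod_diag_if_graded[OF U, of h] U_entry by simp
  qed
  moreover have "det D = (\<Prod>v<n. f v)"
    using det_eq_prod_diag_if_graded[OF D, of "\<lambda>_. 0 :: nat"] by (simp add: D_def mat_diag_def)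
  ultimately show ?thesis
    using det_mult[OF _ mult_carrier_mat[OF D U]] det_mult[OF D U] det_transpose[OF U] U D
    by simp
qed

lemma is_walk_singleton [simp]: "is_walk E [v]"
  unfolding is_walk_def by simp

lemma is_walk_append:
  assumes "is_walk E xs" "is_walk E ys" "E (last xs) (hd ys)"
  shows "is_walk E (xs @ ys)"
  unfolding is_walk_def
proof (intro conjI allI impI)
  show "xs @ ys \<noteq> []"
    using assms(1) unfolding is_walk_def by simp
  fix i assume i: "Suc i < length (xs @ ys)"
  have xs: "xs \<noteq> []" "\<And>i. Suc i < length xs \<Longrightarrow> E (xs ! i) (xs ! Suc i)"
    using assms(1) unfolding is_walk_def by auto
  have ys: "ys \<noteq> []" "\<And>i. Suc i < length ys \<Longrightarrow> E (ys ! i) (ys ! Suc i)"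
    using assms(2) unfolding is_walk_def by auto
  consider "Suc i < length xs" | "Suc i = length xs" | "length xs < Suc i"
    by linarith
  then show "E ((xs @ ys) ! i) ((xs @ ys) ! Suc i)"
  proof cases
    case 1
    then show ?thesis
      using xs by (simp add: nth_append)
  next
    case 2
    then have "(xs @ ys) ! i = last xs" "(xs @ ys) ! Suc i = hd ys"
      using xs(1) ys(1) 2[symmetric] by (auto simp: nth_append last_conv_nth hd_conv_nth)
    then show ?thesis
      using assms(3) by simp
  next
    case 3
    then have "Suc i - length xs = Suc (i - length xs)" "Suc (i - length xs) < length ys"
      using i by auto
    then show ?thesis
      using 3 ys(2) by (simp add: nth_append)
  qed
qed

lemma is_walk_take: "is_walk E xs \<Longrightarrow> 0 < m \<Longrightarrow> is_walk E (take m xs)"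
  unfolding is_walk_def by auto

lemma is_walk_rev:
  assumes "is_walk E xs" and sym: "\<And>a b. E a b \<Longrightarrow> E b a"
  shows "is_walk E (rev xs)"
  unfolding is_walk_def
proof (intro conjI allI impI)
  show "rev xs \<noteq> []"
    using assms(1) unfolding is_walk_def by simp
  fix i assume i: "Suc i < length (rev xs)"
  let ?j = "length xs - Suc (Suc i)"
  have "E (xs ! ?j) (xs ! Suc ?j)"
    using assms(1) i unfolding is_walk_def by auto
  moreover have "Suc ?j = length xs - Suc i"
    using i by simp
  ultimately show "E (rev xs ! i) (rev xs ! Suc i)"
    using i sym by (simp add: rev_nth)
qed

lemma is_walk_snocD:
  assumes "is_walk E (xs @ [v])" "xs \<noteq> []"
  shows "is_walk E xs" "E (last xs) v"
proof -
  have step: "E ((xs @ [v]) ! i) ((xs @ [v]) ! Suc i)" if "Suc i < Suc (length xs)" for i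
    using assms(1) that unfolding is_walk_def by simp
  show "is_walk E xs"
    unfolding is_walk_def
  proof (intro conjI allI impI)
    fix i assume "Suc i < length xs"
    then show "E (xs ! i) (xs ! Suc i)"
      using step[of i] by (simp add: nth_append)
  qed (use assms(2) in simp)
  show "E (last xs) v"
    using step[of "length xs - 1"] assms(2) by (simp add: nth_append last_conv_nth)
qed

text \<open>The cycle follows A up to its first vertex on B, then B back to its start, and closes
  with the edge from hd B to hd A.\<close>

lemma has_cycleI_meeting_walks:
  assumes sym: "\<And>a b. E a b \<Longrightarrow> E b a"
    and A: "is_walk E A" "distinct A" and B: "is_walk E B" "distinct B"
    and i0: "0 < i0" "i0 < length A" and j0: "0 < j0" "j0 < length B"
    and meet: "A ! i0 = B ! j0" and first: "\<And>i. i < i0 \<Longrightarrow> A ! i \<notin> set B"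
    and closing: "E (hd B) (hd A)"
  shows "has_cycle E"
proof -
  define C where "C = take (Suc i0) A @ rev (take j0 B)"
  have "last (take (Suc i0) A) = B ! j0"
    using i0 meet by (simp add: take_Suc_conv_app_nth)
  moreover have "hd (rev (take j0 B)) = B ! (j0 - 1)"
    using j0 by (cases j0) (auto simp: take_Suc_conv_app_nth)
  moreover have "E (B ! (j0 - 1)) (B ! j0)"
    using B(1) j0 unfolding is_walk_def by (metis Suc_diff_1)
  ultimately have "is_walk E C"
    unfolding C_def using i0 j0 A(1) B(1) sym
    by (intro is_walk_append is_walk_take is_walk_rev) auto
  moreover have "distinct C"
  proof -
    have "set (take (Suc i0) A) \<inter> set (take j0 B) = {}"
    proof (intro disjoint_iff[THEN iffD2] allI impI)
      fix x assume "x \<in> set (take (Suc i0) A)"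
      then obtain i where "i \<le> i0" "x = A ! i"
        using i0 by (auto simp: in_set_conv_nth less_Suc_eq_le)
      moreover have "B ! j0 \<notin> set (take j0 B)"
        using B(2) j0 by (simp add: in_set_conv_nth nth_eq_iff_index_eq)
      ultimately show "x \<notin> set (take j0 B)"
        using first meet by (metis le_neq_implies_less in_set_takeD)
    qed
    then show ?thesis
      unfolding C_def using A(2) B(2) by simp
  qed
  moreover have "hd C = hd A"
    unfolding C_def using i0 by (cases A) auto
  moreover have "last C = hd B"
    unfolding C_def using j0 by (cases B) (auto simp: last_rev)
  moreover have "3 \<le> length C"
    unfolding C_def using i0 j0 by simp
  ultimately show ?thesis
    unfolding has_cycle_def using closing by metis
qed

locale rooted_tree =
  fixes N :: nat and E :: "nat \<Rightarrow> nat \<Rightarrow> bool" and r :: nat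
  assumes tree: "is_tree N E" and root_in: "r < N"
begin

abbreviation depth :: "nat \<Rightarrow> nat" where
  "depth v \<equiv> gdist E r v"

lemma edgeD: "E u v \<Longrightarrow> u < N \<and> v < N \<and> u \<noteq> v \<and> E v u"
  using tree unfolding is_tree_def simple_graph_def by blast

lemma edge_sym: "E u v \<Longrightarrow> E v u"
  using edgeD by blast

lemma shortest_walk_from_root:
  assumes "v < N"
  obtains xs where "is_walk E xs" "hd xs = r" "last xs = v" "length xs = Suc (depth v)"
proof -
  obtain xs where "is_walk E xs" "hd xs = r" "last xs = v"
    using tree assms root_in unfolding is_tree_def connected_graph_def by blast
  then have "\<exists>m xs. is_walk E xs \<and> hd xs = r \<and> last xs = v \<and> length xs = Suc m"
    by (intro exI[of _ "length xs - 1"] exI[of _ xs]) (auto simp: is_walk_def)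
  from LeastI_ex[OF this] show ?thesis
    using that unfolding gdist_def by blast
qed

lemma depth_le_walk:
  assumes "is_walk E xs" "hd xs = r" "last xs = v"
  shows "depth v \<le> length xs - 1"
  unfolding gdist_def
  by (rule Least_le) (use assms in \<open>auto simp: is_walk_def intro!: exI[of _ xs]\<close>)

lemma depth_root [simp]: "depth r = 0"
  using depth_le_walk[of "[r]"] by simp

lemma depth_eq_0_iff:
  assumes "v < N"
  shows "depth v = 0 \<longleftrightarrow> v = r"
proof
  assume "depth v = 0"
  moreover obtain xs where "hd xs = r" "last xs = v" "length xs = Suc (depth v)"
    using shortest_walk_from_root assms by blast
  ultimately show "v = r"
    by (auto simp: length_Suc_conv)
qed simp

lemma depth_edge: "E u v \<Longrightarrow> depth v \<le> depth u + 1"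
proof -
  assume uv: "E u v"
  obtain xs where xs: "is_walk E xs" "hd xs = r" "last xs = u" "length xs = Suc (depth u)"
    using shortest_walk_from_root edgeD[OF uv] by blast
  have "is_walk E (xs @ [v])" "hd (xs @ [v]) = r"
    using is_walk_append[OF xs(1), of "[v]"] xs uv by (auto simp: is_walk_def)
  then show ?thesis
    using depth_le_walk[of "xs @ [v]" v] xs(4) by simp
qed

lemma parent_exists:
  assumes v: "v < N" "v \<noteq> r"
  shows "\<exists>p. E v p \<and> depth p + 1 = depth v"
proof -
  obtain xs where xs: "is_walk E xs" "hd xs = r" "last xs = v" "length xs = Suc (depth v)"
    using shortest_walk_from_root v(1) by blast
  have "depth v \<noteq> 0"
    using depth_eq_0_iff v by blast
  define ys where "ys = butlast xs"
  have "xs \<noteq> []"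
    using xs(4) by auto
  then have "xs = ys @ [v]"
    unfolding ys_def using xs(3) append_butlast_last_id by metis
  moreover have "ys \<noteq> []"
    using xs(4) \<open>depth v \<noteq> 0\<close> unfolding ys_def by (simp flip: length_0_conv)
  ultimately have ys: "xs = ys @ [v]" "ys \<noteq> []" .
  have "is_walk E ys" "E (last ys) v"
    using is_walk_snocD xs(1) ys by auto
  moreover have "hd ys = r"
    using xs(2) ys by simp
  ultimately have "depth (last ys) \<le> length ys - 1"
    using depth_le_walk by blast
  moreover have "length ys = depth v"
    using xs(4) ys(1) by simp
  ultimately have "depth (last ys) + 1 = depth v"
    using depth_edge[OF \<open>E (last ys) v\<close>] \<open>depth v \<noteq> 0\<close> by linarith
  then show ?thesis
    using \<open>E (last ys) v\<close> edge_sym by blast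
qed

definition parent :: "nat \<Rightarrow> nat" where
  "parent v = (if v < N \<and> v \<noteq> r then SOME p. E v p \<and> depth p + 1 = depth v else v)"

lemma
  assumes "v < N" "v \<noteq> r"
  shows edge_parent: "E v (parent v)"
    and depth_parent: "depth (parent v) + 1 = depth v"
    and parent_in: "parent v < N"
    and parent_neq: "parent v \<noteq> v"
proof -
  show "E v (parent v)" "depth (parent v) + 1 = depth v"
    unfolding parent_def using assms someI_ex[OF parent_exists[OF assms]] by simp_all
  then show "parent v < N" "parent v \<noteq> v"
    using edgeD by blast+
qed

lemma parent_root [simp]: "parent r = r"
  unfolding parent_def by simp

lemma parent_eq_self_iff: "v < N \<Longrightarrow> parent v = v \<longleftrightarrow> v = r"
  using parent_neq by auto

lemma funpow_parent:
  assumes "v < N" "i \<le> depth v"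
  shows "depth ((parent ^^ i) v) = depth v - i \<and> (parent ^^ i) v < N"
  using assms(2)
proof (induction i)
  case (Suc i)
  then have IH: "depth ((parent ^^ i) v) = depth v - i" "(parent ^^ i) v < N"
    by simp_all
  moreover have "(parent ^^ i) v \<noteq> r"
    using IH(1) Suc.prems by auto
  ultimately show ?case
    using depth_parent[of "(parent ^^ i) v"] parent_in[of "(parent ^^ i) v"] by auto
qed (use assms in simp)

lemma edge_funpow_parent:
  assumes "v < N" "i < depth v"
  shows "E ((parent ^^ i) v) ((parent ^^ Suc i) v)"
proof -
  have "(parent ^^ i) v < N" "(parent ^^ i) v \<noteq> r"
    using funpow_parent[OF assms(1), of i] assms(2) by auto
  then show ?thesis
    using edge_parent by simp
qed

definition root_path :: "nat \<Rightarrow> nat list" where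
  "root_path v = map (\<lambda>i. (parent ^^ i) v) [0..<Suc (depth v)]"

lemma length_root_path [simp]: "length (root_path v) = Suc (depth v)"
  unfolding root_path_def by simp

lemma nth_root_path: "i \<le> depth v \<Longrightarrow> root_path v ! i = (parent ^^ i) v"
  unfolding root_path_def by (simp del: upt_Suc add: less_Suc_eq_le)

lemma root_path_walk:
  assumes "v < N"
  shows "is_walk E (root_path v)"
  unfolding is_walk_def length_root_path
proof (intro conjI allI impI)
  show "root_path v \<noteq> []"
    by (simp add: root_path_def)
  fix i assume "Suc i < Suc (depth v)"
  then show "E (root_path v ! i) (root_path v ! Suc i)"
    using edge_funpow_parent[OF assms, of i] by (simp add: nth_root_path)
qed

lemma distinct_root_path:
  assumes "v < N"
  shows "distinct (root_path v)"
  unfolding distinct_conv_nth length_root_path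
proof (intro allI impI)
  fix i j assume "i < Suc (depth v)" "j < Suc (depth v)" "i \<noteq> j"
  then show "root_path v ! i \<noteq> root_path v ! j"
    using funpow_parent[OF assms, of i] funpow_parent[OF assms, of j] nth_root_path
    by (metis diff_diff_cancel less_Suc_eq_le)
qed

lemma hd_root_path: "hd (root_path v) = v"
  unfolding root_path_def by (simp del: upt_Suc add: upt_conv_Cons)

lemma root_path_depth: "v < N \<Longrightarrow> root_path v ! depth v = r"
  using funpow_parent[of v "depth v"] depth_eq_0_iff[of "(parent ^^ depth v) v"] nth_root_path
  by simp

lemma edge_not_to_ancestor:
  assumes uv: "E u v" "u \<noteq> parent v" and j: "j \<le> depth v"
  shows "u \<noteq> (parent ^^ j) v"
proof
  assume u: "u = (parent ^^ j) v"
  have "depth u = depth v - j"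
    using funpow_parent[OF _ j] edgeD[OF uv(1)] u by simp
  then have "j \<le> 1"
    using depth_edge[OF uv(1)] j by linarith
  then show False
    using u uv edgeD by (cases j) auto
qed

text \<open>In a tree every edge joins a vertex to its parent: otherwise the edge would close the two
  root paths of its endpoints into a cycle.\<close>

lemma edge_parent_cases:
  assumes uv: "E u v"
  shows "u = parent v \<or> v = parent u"
proof (rule ccontr)
  assume not_parent: "\<not> (u = parent v \<or> v = parent u)"
  have u: "u < N" and v: "v < N"
    using edgeD[OF uv] by auto
  define A where "A = root_path u"
  define B where "B = root_path v"
  have r_in_B: "r \<in> set B"
    using root_path_depth[OF v] nth_mem[of "depth v" B] by (simp add: B_def)
  have A_depth: "A ! depth u \<in> set B"
    using root_path_depth[OF u] r_in_B by (simp add: A_def)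
  define i0 where "i0 = (LEAST i. A ! i \<in> set B)"
  have i0_le: "i0 \<le> depth u"
    unfolding i0_def using A_depth by (rule Least_le)
  have first: "A ! i \<notin> set B" if "i < i0" for i
    using not_less_Least that unfolding i0_def by blast
  obtain j0 where j0: "j0 < length B" "B ! j0 = A ! i0"
    using LeastI[of "\<lambda>i. A ! i \<in> set B", OF A_depth] unfolding i0_def[symmetric]
    by (auto simp: in_set_conv_nth)
  then have A_i0: "A ! i0 = (parent ^^ i0) u" and B_j0: "B ! j0 = (parent ^^ j0) v"
    using i0_le by (simp_all add: A_def B_def nth_root_path)
  have "0 < i0"
    using edge_not_to_ancestor[OF uv, of j0] not_parent j0 A_i0 B_j0 B_def by (cases i0) auto
  moreover have "0 < j0"
    using edge_not_to_ancestor[OF edge_sym[OF uv], of i0] not_parent i0_le j0 A_i0 B_j0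
    by (cases j0) auto
  moreover have "E (hd B) (hd A)"
    using edge_sym[OF uv] by (simp add: A_def B_def hd_root_path)
  ultimately have "has_cycle E"
    by (intro has_cycleI_meeting_walks[of E A B i0 j0])
      (use edge_sym root_path_walk distinct_root_path u v i0_le j0 first in \<open>auto simp: A_def B_def\<close>)
  then show False
    using tree unfolding is_tree_def by blast
qed

definition children :: "nat \<Rightarrow> nat set" where
  "children v = {c. c < N \<and> c \<noteq> r \<and> parent c = v}"

lemma finite_children [simp]: "finite (children v)"
  unfolding children_def by simp

lemma depth_child: "c \<in> children v \<Longrightarrow> depth c = depth v + 1"
  unfolding children_def using depth_parent by force

lemma degree_eq_card_children:
  assumes v: "v < N"
  shows "degree N E v = card (children v) + (if v = r then 0 else 1)"
proof -
  have "{u. u < N \<and> E v u} = children v \<union> (if v = r then {} else {parent v})"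
  proof (intro equalityI subsetI)
    fix u assume "u \<in> {u. u < N \<and> E v u}"
    then have u: "u < N" "E v u"
      by auto
    then have "u \<noteq> v"
      using edgeD by blast
    then consider "v = parent u" "u \<noteq> r" | "u = parent v" "v \<noteq> r"
      using edge_parent_cases[OF u(2)] parent_root by metis
    then show "u \<in> children v \<union> (if v = r then {} else {parent v})"
      by cases (use u in \<open>auto simp: children_def\<close>)
  next
    fix u assume "u \<in> children v \<union> (if v = r then {} else {parent v})"
    then consider "u < N" "u \<noteq> r" "parent u = v" | "v \<noteq> r" "u = parent v"
      by (auto simp: children_def split: if_splits)
    then show "u \<in> {u. u < N \<and> E v u}"
    proof cases
      case 1
      then show ?thesis
        using edge_parent[of u] edge_sym by auto
    next
      case 2
      then show ?thesis
        using v edge_parent parent_in by auto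
    qed
  qed
  moreover have "parent v \<notin> children v" if "v \<noteq> r"
    using depth_child depth_parent[OF v that] by fastforce
  ultimately show ?thesis
    unfolding degree_def by (simp add: card_insert_if)
qed

end

lemma poly_char_poly_eq_det:
  fixes A :: "'a::comm_ring_1 mat"
  assumes A: "A \<in> carrier_mat n n"
  shows "poly (char_poly A) x = det (mat n n (\<lambda>(i, j). (if i = j then x else 0) - A $$ (i, j)))"
  unfolding char_poly_def
  by (rule poly_det_cong[of _ n]) (use A in \<open>auto simp: char_poly_matrix_def\<close>)

text \<open>The number of children of a vertex at level s counted from the leaves (s = k is the root);
  the squared superdiagonal entries of T_mat are (1 - \<alpha>)^2 times these numbers.\<close>

definition children_count :: "(nat \<Rightarrow> nat) \<Rightarrow> nat \<Rightarrow> nat \<Rightarrow> real" where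
  "children_count d k s = (if s = k then real (d k) else real (d s) - 1)"

text \<open>The pivots of symmetric Gaussian elimination of x I - T_k; they are also the pivots of
  x I - A_\<alpha> when the tree is eliminated from the leaves up. Once a pivot vanishes the later
  ones are junk (x / 0 = 0), hence the nonvanishing hypotheses below.\<close>

fun T_pivot :: "real \<Rightarrow> (nat \<Rightarrow> nat) \<Rightarrow> nat \<Rightarrow> real \<Rightarrow> nat \<Rightarrow> real" where
  "T_pivot \<alpha> d k x 0 = 1"
| "T_pivot \<alpha> d k x (Suc s) = (if s = 0 then x - \<alpha>
     else x - \<alpha> * real (d (Suc s)) - (1 - \<alpha>)^2 * children_count d k (Suc s) / T_pivot \<alpha> d k x s)"

lemma T_mat_carrier: "T_mat \<alpha> d k j \<in> carrier_mat j j"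
  unfolding T_mat_def by simp

lemma poly_char_poly_T_mat:
  assumes mk: "m \<le> k"
    and d_pos: "\<And>s. 2 \<le> s \<Longrightarrow> s < k \<Longrightarrow> 1 \<le> d s"
    and pivot_nz: "\<And>i. 1 \<le> i \<Longrightarrow> i < m \<Longrightarrow> T_pivot \<alpha> d k x i \<noteq> 0"
  shows "poly (char_poly (T_mat \<alpha> d k m)) x = (\<Prod>i = 1..m. T_pivot \<alpha> d k x i)"
proof -
  define T where "T = T_mat \<alpha> d k m"
  define M where "M = mat m m (\<lambda>(i, j). (if i = j then x else 0) - T $$ (i, j))"
  have T_entry: "T $$ (a, b) = (if a = b then (if a = 0 then \<alpha> else \<alpha> * real (d (a + 1)))
     else if b = a + 1 \<or> a = b + 1 then
       (let s = max a b + 1 in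
        if s = k then (1 - \<alpha>) * sqrt (real (d k)) else (1 - \<alpha>) * sqrt (real (d s) - 1))
     else 0)" if "a < m" "b < m" for a b
    using that unfolding T_def T_mat_def by simp
  have M_entry: "M $$ (a, b) = (if a = b then x else 0) - T $$ (a, b)" if "a < m" "b < m" for a b
    using that unfolding M_def by simp
  define par where "par a = (if a + 1 < m then a + 1 else a)" for a :: nat
  have "det M = (\<Prod>a<m. T_pivot \<alpha> d k x (a + 1))"
  proof (rule det_tree_elimination[of M m par "\<lambda>a. a"])
    show "M \<in> carrier_mat m m"
      by (simp add: M_def)
  next
    fix i assume "i < m" "par i \<noteq> i"
    then show "par i < m \<and> i < par i"
      unfolding par_def by (auto split: if_splits)
  next
    fix i assume "i < m" "par i \<noteq> i"
    then show "T_pivot \<alpha> d k x (i + 1) \<noteq> 0"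
      unfolding par_def using pivot_nz[of "i + 1"] by (simp del: T_pivot.simps split: if_splits)
  next
    fix i j assume "i < m" "j < m"
    then show "M $$ (i, j) = M $$ (j, i)"
      by (cases "i = j") (simp_all add: M_entry T_entry max.commute Let_def)
  next
    fix i j assume "i < m" "j < m" "i \<noteq> j" "j \<noteq> par i" "i \<noteq> par j"
    then show "M $$ (i, j) = 0"
      unfolding par_def by (auto simp: M_entry T_entry split: if_splits)
  next
    fix v assume v: "v < m"
    show "M $$ (v, v) = T_pivot \<alpha> d k x (v + 1) +
      (\<Sum>c | c < m \<and> par c \<noteq> c \<and> par c = v. M $$ (c, v)^2 / T_pivot \<alpha> d k x (c + 1))"
    proof (cases v)
      case 0
      then have no_children: "{c. c < m \<and> par c \<noteq> c \<and> par c = v} = {}"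
        unfolding par_def by auto
      show ?thesis
        unfolding no_children using 0 v by (simp add: M_entry T_entry)
    next
      case (Suc a)
      have children: "{c. c < m \<and> par c \<noteq> c \<and> par c = v} = {a}"
        unfolding par_def using Suc v by auto
      have "M $$ (a, v)^2 = (1 - \<alpha>)^2 * children_count d k (v + 1)"
        using Suc v mk d_pos[of "v + 1"]
        by (auto simp: M_entry T_entry children_count_def power_mult_distrib)
      then show ?thesis
        unfolding children using Suc v by (simp add: M_entry T_entry)
    qed
  qed
  also have "\<dots> = (\<Prod>i = 1..m. T_pivot \<alpha> d k x i)"
    by (rule prod.reindex_bij_witness[of _ "\<lambda>i. i - 1" "\<lambda>a. a + 1"]) auto
  finally show ?thesis
    using poly_char_poly_eq_det[OF T_mat_carrier] unfolding M_def T_def by simp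
qed

lemma poly_eqI_cofinite:
  fixes p q :: "'a::{idom, ring_char_0} poly"
  assumes "finite Z" "\<And>x. x \<notin> Z \<Longrightarrow> poly p x = poly q x"
  shows "p = q"
proof (rule ccontr)
  assume "p \<noteq> q"
  then have "finite {x. poly (p - q) x = 0}"
    by (intro poly_roots_finite) simp
  moreover have "UNIV \<subseteq> Z \<union> {x. poly (p - q) x = 0}"
    using assms(2) by auto
  ultimately show False
    using assms(1) infinite_UNIV_char_0 finite_subset by blast
qed

lemma poly_root_right_of_negative:
  fixes p :: "real poly"
  assumes "0 < lead_coeff p" "poly p x < 0"
  obtains z where "x < z" "poly p z = 0"
proof -
  obtain y0 where "\<forall>y \<ge> y0. lead_coeff p \<le> poly p y"
    using poly_pinfty_gt_lc[OF assms(1)] by blast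
  then have "lead_coeff p \<le> poly p (max x y0 + 1)"
    by simp
  then have "0 < poly p (max x y0 + 1)"
    using assms(1) by linarith
  moreover have "x < max x y0 + 1"
    by simp
  ultimately obtain z where "x < z" "poly p z = 0"
    using poly_IVT_pos[of x "max x y0 + 1" p] assms(2) by blast
  then show ?thesis
    using that by blast
qed

definition largest_root :: "real poly \<Rightarrow> real" where
  "largest_root p = Max {x. poly p x = 0}"

lemma root_le_largest_root: "p \<noteq> 0 \<Longrightarrow> poly p x = 0 \<Longrightarrow> x \<le> largest_root p"
  unfolding largest_root_def using poly_roots_finite by (intro Max_ge) auto

lemma poly_largest_root:
  assumes "p \<noteq> 0" "poly p x = 0"
  shows "poly p (largest_root p) = 0"
proof -
  have "Max {x. poly p x = 0} \<in> {x. poly p x = 0}"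
    using assms poly_roots_finite by (intro Max_in) auto
  then show ?thesis
    unfolding largest_root_def by simp
qed

lemma poly_nonneg_right_of_largest_root:
  fixes p :: "real poly"
  assumes "0 < lead_coeff p" "largest_root p \<le> x"
  shows "0 \<le> poly p x"
proof (rule ccontr)
  assume "\<not> 0 \<le> poly p x"
  then obtain z where "x < z" "poly p z = 0"
    using poly_root_right_of_negative[OF assms(1), of x] by force
  moreover have "p \<noteq> 0"
    using assms(1) by auto
  ultimately show False
    using root_le_largest_root[of p z] assms(2) by simp
qed

lemma eigenvalues_eq_roots_char_poly:
  fixes B :: "'a::field mat"
  assumes "B \<in> carrier_mat n n"
  shows "{x. eigenvalue B x} = {x. poly (char_poly B) x = 0}"
  using eigenvalue_root_char_poly[OF assms] by simp

lemma prod_power_telescope: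
  fixes G :: "nat \<Rightarrow> 'a::comm_monoid_mult" and n :: "nat \<Rightarrow> nat"
  assumes "\<And>j. 1 \<le> j \<Longrightarrow> j < K \<Longrightarrow> n (j + 1) \<le> n j"
  shows "(\<Prod>j = 1..<K. (\<Prod>i = 1..j. G i) ^ (n j - n (j + 1))) * (\<Prod>i = 1..K. G i) ^ n K
    = (\<Prod>i = 1..K. G i ^ n i)"
  using assms
proof (induction K)
  case (Suc K)
  show ?case
  proof (cases "K = 0")
    case False
    let ?G = "\<Prod>i = 1..K. G i" and ?Q = "\<Prod>j = 1..<K. (\<Prod>i = 1..j. G i) ^ (n j - n (j + 1))"
    have "(\<Prod>j = 1..<Suc K. (\<Prod>i = 1..j. G i) ^ (n j - n (j + 1))) * (\<Prod>i = 1..Suc K. G i) ^ n (Suc K)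
        = ?Q * ?G ^ (n K - n (K + 1)) * (?G * G (Suc K)) ^ n (Suc K)"
      using False by (simp add: prod.atLeastLessThan_Suc prod.nat_ivl_Suc')
    also have "\<dots> = (?Q * ?G ^ (n K - n (K + 1) + n (K + 1))) * G (Suc K) ^ n (Suc K)"
      by (simp add: power_add power_mult_distrib mult_ac)
    also have "n K - n (K + 1) + n (K + 1) = n K"
      using Suc.prems[of K] False by simp
    also have "?Q * ?G ^ n K = (\<Prod>i = 1..K. G i ^ n i)"
      using Suc by simp
    finally show ?thesis
      by (simp add: prod.nat_ivl_Suc' mult.commute)
  qed simp
qed simp

lemma A_alpha_carrier: "A_alpha \<alpha> N E \<in> carrier_mat N N"
  unfolding A_alpha_def deg_mat_def adj_mat_def by simp

locale bethe_tree = rooted_tree +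
  fixes k :: nat and n d :: "nat \<Rightarrow> nat" and \<alpha> :: real
  assumes height: "k = Max (level E r ` {..<N})" and two_le_height: "2 \<le> k"
    and same_degree: "\<And>u v. u < N \<Longrightarrow> v < N \<Longrightarrow> level E r u = level E r v \<Longrightarrow>
      degree N E u = degree N E v"
    and n_def: "\<And>j. j \<in> {1..k} \<Longrightarrow> n j = card {v. v < N \<and> level E r v = k - j + 1}"
    and d_def: "\<And>j v. j \<in> {1..k} \<Longrightarrow> v < N \<Longrightarrow> level E r v = k - j + 1 \<Longrightarrow>
      degree N E v = d j"
begin

lemma level_eq: "level E r v = depth v + 1"
  unfolding level_def by simp

lemma depth_less_height: "v < N \<Longrightarrow> depth v < k"
  using Max_ge[of "level E r ` {..<N}" "level E r v"] unfolding height[symmetric] level_eq by simp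

lemma exists_depth:
  assumes "l < k"
  obtains v where "v < N" "depth v = l"
proof -
  have "k \<in> level E r ` {..<N}"
    unfolding height using root_in by (intro Max_in) auto
  then obtain w where w: "w < N" "depth w = k - 1"
    unfolding level_eq by force
  then have "k - 1 - l \<le> depth w"
    by simp
  then show ?thesis
    using that funpow_parent[OF w(1)] w(2) assms by fastforce
qed

lemma children_nonempty:
  assumes v: "v < N" and below: "depth v + 1 < k"
  shows "children v \<noteq> {}"
proof -
  obtain c where c: "c < N" "depth c = depth v + 1"
    using exists_depth below by blast
  then have "c \<noteq> r"
    by auto
  define u where "u = parent c"
  have u: "u < N" "depth u = depth v" "c \<in> children u"
    using c \<open>c \<noteq> r\<close> parent_in[of c] depth_parent[of c] unfolding u_def children_def by auto
  have "degree N E u = degree N E v"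
    using same_degree[OF u(1) v] u(2) by (simp add: level_eq)
  moreover have "u = r \<longleftrightarrow> v = r"
    using u(1,2) v depth_eq_0_iff by metis
  ultimately have "card (children v) = card (children u)"
    using degree_eq_card_children[OF u(1)] degree_eq_card_children[OF v] by simp
  then show ?thesis
    using u(3) by auto
qed

lemma
  assumes v: "v < N" and bottom: "depth v + 1 = k"
  shows children_bottom: "children v = {}"
    and degree_bottom: "degree N E v = 1"
proof -
  show "children v = {}"
    using depth_child depth_less_height children_def bottom by fastforce
  moreover have "v \<noteq> r"
    using bottom two_le_height by auto
  ultimately show "degree N E v = 1"
    using degree_eq_card_children[OF v] by simp
qed

lemma n_eq_card_depth: "j \<in> {1..k} \<Longrightarrow> n j = card {v. v < N \<and> depth v = k - j}"
  using n_def by (simp add: level_eq)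

lemma n_antimono:
  assumes "1 \<le> j" "j < k"
  shows "n (j + 1) \<le> n j"
proof -
  define S where "S = {v. v < N \<and> depth v = k - j}"
  have "{v. v < N \<and> depth v = k - (j + 1)} \<subseteq> parent ` S"
  proof
    fix v assume "v \<in> {v. v < N \<and> depth v = k - (j + 1)}"
    then have v: "v < N" "depth v = k - (j + 1)"
      by auto
    then obtain c where "c \<in> children v"
      using children_nonempty assms by fastforce
    then show "v \<in> parent ` S"
      using depth_child v assms unfolding children_def S_def by force
  qed
  then have "card {v. v < N \<and> depth v = k - (j + 1)} \<le> card S"
    using surj_card_le[of S] by (simp add: S_def)
  then show ?thesis
    using n_eq_card_depth[of j] n_eq_card_depth[of "j + 1"] assms by (simp add: S_def)
qed

lemma n_height: "n k = 1"
proof -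
  have "{v. v < N \<and> depth v = 0} = {r}"
    using depth_eq_0_iff root_in by auto
  then show ?thesis
    using n_eq_card_depth[of k] two_le_height by simp
qed

lemma d_pos:
  assumes "2 \<le> s" "s < k"
  shows "1 \<le> d s"
proof -
  obtain v where v: "v < N" "depth v = k - s"
    using exists_depth[of "k - s"] assms by auto
  then have "v \<noteq> r"
    using assms by auto
  then have "1 \<le> degree N E v"
    using degree_eq_card_children[OF v(1)] by simp
  moreover have "degree N E v = d s"
    using d_def[of s v] v assms by (simp add: level_eq)
  ultimately show ?thesis
    by simp
qed

lemma T_pivot_vertex:
  assumes v: "v < N"
  shows "x - \<alpha> * real (degree N E v) = T_pivot \<alpha> d k x (k - depth v)
    + real (card (children v)) * (1 - \<alpha>)^2 / T_pivot \<alpha> d k x (k - depth v - 1)"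
proof (cases "depth v + 1 = k")
  case True
  then have "k - depth v = 1"
    by simp
  then show ?thesis
    using children_bottom[OF v True] degree_bottom[OF v True] by simp
next
  case False
  then have below: "depth v + 1 < k"
    using depth_less_height[OF v] by simp
  define s where "s = k - depth v - 1"
  have s: "k - depth v = Suc s" "s \<noteq> 0"
    using below by (auto simp: s_def)
  have "degree N E v = d (Suc s)"
    using d_def[of "Suc s" v] v s by (simp add: level_eq)
  moreover have "real (card (children v)) = children_count d k (Suc s)"
  proof (cases "v = r")
    case True
    then show ?thesis
      using degree_eq_card_children[OF v] \<open>degree N E v = d (Suc s)\<close> s
      by (simp add: children_count_def)
  next
    case False
    then have "Suc s \<noteq> k"
      using depth_eq_0_iff[OF v] s by simp
    then show ?thesis
      using degree_eq_card_children[OF v] \<open>degree N E v = d (Suc s)\<close> False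
      by (simp add: children_count_def)
  qed
  ultimately show ?thesis
    unfolding s s_def[symmetric] using s(2) by simp
qed

lemma prod_over_levels:
  fixes g :: "nat \<Rightarrow> 'a::comm_monoid_mult"
  shows "(\<Prod>v<N. g (k - depth v)) = (\<Prod>s = 1..k. g s ^ n s)"
proof -
  have "(\<Prod>v<N. g (k - depth v))
      = (\<Prod>s = 1..k. \<Prod>v \<in> {v \<in> {..<N}. k - depth v = s}. g (k - depth v))"
    by (rule prod.group[symmetric]) (auto dest: depth_less_height)
  also have "\<dots> = (\<Prod>s = 1..k. g s ^ n s)"
  proof (rule prod.cong[OF refl])
    fix s assume s: "s \<in> {1..k}"
    then have "{v \<in> {..<N}. k - depth v = s} = {v. v < N \<and> depth v = k - s}"
      using depth_less_height by fastforce
    then show "(\<Prod>v \<in> {v \<in> {..<N}. k - depth v = s}. g (k - depth v)) = g s ^ n s"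
      using n_eq_card_depth[OF s] s by simp
  qed
  finally show ?thesis .
qed

lemma poly_char_poly_A_alpha:
  assumes pivot_nz: "\<And>i. 1 \<le> i \<Longrightarrow> i < k \<Longrightarrow> T_pivot \<alpha> d k x i \<noteq> 0"
  shows "poly (char_poly (A_alpha \<alpha> N E)) x = (\<Prod>s = 1..k. T_pivot \<alpha> d k x s ^ n s)"
proof -
  define A where "A = A_alpha \<alpha> N E"
  define M where "M = mat N N (\<lambda>(i, j). (if i = j then x else 0) - A $$ (i, j))"
  have M_entry: "M $$ (u, v) = (if u = v then x - \<alpha> * real (degree N E u) else 0)
      - (1 - \<alpha>) * (if E u v then 1 else 0)" if "u < N" "v < N" for u v
    using that by (simp add: M_def A_def A_alpha_def deg_mat_def adj_mat_def)
  define f where "f v = T_pivot \<alpha> d k x (k - depth v)" for v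
  have "det M = (\<Prod>v<N. f v)"
  proof (rule det_tree_elimination[of M N parent "\<lambda>v. k - depth v"])
    show "M \<in> carrier_mat N N"
      by (simp add: M_def)
  next
    fix i j assume "i < N" "j < N"
    then show "M $$ (i, j) = M $$ (j, i)"
      using edge_sym by (auto simp: M_entry)
  next
    fix i assume i: "i < N" "parent i \<noteq> i"
    then have "i \<noteq> r"
      by auto
    then show "parent i < N \<and> k - depth i < k - depth (parent i)"
      using i parent_in[of i] depth_parent[of i] depth_less_height[of i] by simp
  next
    fix i j assume "i < N" "j < N" "i \<noteq> j" "j \<noteq> parent i" "i \<noteq> parent j"
    then show "M $$ (i, j) = 0"
      using edge_parent_cases by (auto simp: M_entry)
  next
    fix i assume i: "i < N" "parent i \<noteq> i"
    then have "i \<noteq> r"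
      by auto
    then have "1 \<le> k - depth i" "k - depth i < k"
      using i depth_eq_0_iff[of i] depth_less_height[of i] by simp_all
    then show "f i \<noteq> 0"
      using pivot_nz by (simp add: f_def del: T_pivot.simps)
  next
    fix v assume v: "v < N"
    have "{c. c < N \<and> parent c \<noteq> c \<and> parent c = v} = children v"
      unfolding children_def using parent_eq_self_iff by auto
    moreover have "M $$ (c, v)^2 / f c = (1 - \<alpha>)^2 / T_pivot \<alpha> d k x (k - depth v - 1)"
      if "c \<in> children v" for c
      using that v edge_parent[of c] edgeD depth_child[OF that]
      by (auto simp: children_def M_entry f_def power2_commute)
    moreover have "\<not> E v v"
      using edgeD by blast
    ultimately show "M $$ (v, v) =
      f v + (\<Sum>c | c < N \<and> parent c \<noteq> c \<and> parent c = v. M $$ (c, v)^2 / f c)"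
      using T_pivot_vertex[OF v, of x] v by (simp add: M_entry f_def)
  qed
  then show ?thesis
    using poly_char_poly_eq_det[OF A_alpha_carrier] prod_over_levels
    unfolding M_def A_def f_def by simp
qed

definition T_poly :: "nat \<Rightarrow> real poly" where
  "T_poly j = char_poly (T_mat \<alpha> d k j)"

lemma lead_coeff_T_poly: "lead_coeff (T_poly j) = 1"
  using degree_monic_char_poly[OF T_mat_carrier] unfolding T_poly_def by simp

lemma T_poly_nonzero: "T_poly j \<noteq> 0"
  using lead_coeff_T_poly[of j] by auto

text \<open>Outside this finite set no pivot vanishes.\<close>

definition pivot_singularities :: "real set" where
  "pivot_singularities = (\<Union>j \<in> {1..<k}. {x. poly (T_poly j) x = 0})"

lemma finite_pivot_singularities: "finite pivot_singularities"
  unfolding pivot_singularities_def using poly_roots_finite[OF T_poly_nonzero] by auto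

lemma poly_T_poly_eq_prod_pivots:
  assumes "x \<notin> pivot_singularities" "j \<le> k"
  shows "poly (T_poly j) x = (\<Prod>i = 1..j. T_pivot \<alpha> d k x i)"
  using assms(2)
proof (induction j rule: less_induct)
  case (less j)
  have "T_pivot \<alpha> d k x i \<noteq> 0" if i: "1 \<le> i" "i < j" for i
  proof -
    have "poly (T_poly i) x \<noteq> 0"
      using assms(1) i less.prems unfolding pivot_singularities_def by auto
    then show ?thesis
      using less.IH[of i] i less.prems by simp
  qed
  then show ?case
    unfolding T_poly_def using less.prems by (intro poly_char_poly_T_mat d_pos) auto
qed

lemma T_pivot_nonzero:
  assumes "x \<notin> pivot_singularities" "1 \<le> i" "i < k"
  shows "T_pivot \<alpha> d k x i \<noteq> 0"
proof -
  have "poly (T_poly i) x \<noteq> 0"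
    using assms unfolding pivot_singularities_def by auto
  then show ?thesis
    using poly_T_poly_eq_prod_pivots[OF assms(1), of i] assms(2,3) by simp
qed

lemma char_poly_A_alpha:
  "char_poly (A_alpha \<alpha> N E) = (\<Prod>j = 1..k - 1. T_poly j ^ (n j - n (j + 1))) * T_poly k"
proof (rule poly_eqI_cofinite[OF finite_pivot_singularities])
  fix x assume x: "x \<notin> pivot_singularities"
  have "poly (char_poly (A_alpha \<alpha> N E)) x = (\<Prod>s = 1..k. T_pivot \<alpha> d k x s ^ n s)"
    using poly_char_poly_A_alpha T_pivot_nonzero[OF x] by blast
  also have "\<dots> = (\<Prod>j = 1..<k. (\<Prod>i = 1..j. T_pivot \<alpha> d k x i) ^ (n j - n (j + 1)))
      * (\<Prod>i = 1..k. T_pivot \<alpha> d k x i) ^ n k"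
    by (rule prod_power_telescope[symmetric]) (use n_antimono in auto)
  also have "\<dots> = poly ((\<Prod>j = 1..k - 1. T_poly j ^ (n j - n (j + 1))) * T_poly k) x"
    using poly_T_poly_eq_prod_pivots[OF x] two_le_height n_height
    by (simp add: poly_prod atLeastLessThanSuc_atLeastAtMost[symmetric])
  finally show "poly (char_poly (A_alpha \<alpha> N E)) x = \<dots>" .
qed

lemma spectrum_mset_A_alpha:
  "spectrum_mset (A_alpha \<alpha> N E) =
     (\<Sum>j = 1..k - 1. repeat_mset (n j - n (j + 1)) (spectrum_mset (T_mat \<alpha> d k j)))
     + spectrum_mset (T_mat \<alpha> d k k)"
  unfolding spectrum_mset_def char_poly_A_alpha T_poly_def[symmetric]
  using T_poly_nonzero
  by (simp add: proots_mult proots_prod proots_power prod_zero_iff)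

lemma T_poly_recurrence:
  assumes "1 \<le> j" "j < k"
  shows "T_poly (j + 1) = [:- \<alpha> * real (d (j + 1)), 1:] * T_poly j
    - Polynomial.smult ((1 - \<alpha>)^2 * children_count d k (j + 1)) (T_poly (j - 1))"
proof (rule poly_eqI_cofinite[OF finite_pivot_singularities])
  fix x assume x: "x \<notin> pivot_singularities"
  define P where "P = (\<Prod>i = 1..j - 1. T_pivot \<alpha> d k x i)"
  have intervals: "{1..j} = insert j {1..j - 1}" "{1..j + 1} = insert (j + 1) {1..j}"
    using assms(1) by auto
  then have prev: "poly (T_poly (j - 1)) x = P" and cur: "poly (T_poly j) x = P * T_pivot \<alpha> d k x j"
    using poly_T_poly_eq_prod_pivots[OF x] assms by (simp_all add: P_def mult_ac del: T_pivot.simps)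
  have "poly (T_poly (j + 1)) x = P * (T_pivot \<alpha> d k x j * T_pivot \<alpha> d k x (j + 1))"
    using poly_T_poly_eq_prod_pivots[OF x] intervals assms by (simp add: P_def mult_ac del: T_pivot.simps)
  also have "T_pivot \<alpha> d k x j * T_pivot \<alpha> d k x (j + 1)
      = (x - \<alpha> * real (d (j + 1))) * T_pivot \<alpha> d k x j - (1 - \<alpha>)^2 * children_count d k (j + 1)"
    using T_pivot_nonzero[OF x] assms by (simp add: field_simps)
  finally show "poly (T_poly (j + 1)) x = poly ([:- \<alpha> * real (d (j + 1)), 1:] * T_poly j
    - Polynomial.smult ((1 - \<alpha>)^2 * children_count d k (j + 1)) (T_poly (j - 1))) x"
    using prev cur by (simp add: algebra_simps)
qed

lemma poly_T_poly_0: "poly (T_poly 0) x = 1"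
  using poly_char_poly_T_mat[of 0 k d \<alpha> x] d_pos unfolding T_poly_def by simp

lemma roots_T_poly_1: "{x. poly (T_poly 1) x = 0} = {\<alpha>}"
  using poly_char_poly_T_mat[of 1 k d \<alpha>] d_pos two_le_height unfolding T_poly_def by auto

lemma children_count_nonneg: "2 \<le> s \<Longrightarrow> s \<le> k \<Longrightarrow> 0 \<le> children_count d k s"
  using d_pos[of s] by (auto simp: children_count_def)

lemma root_T_poly_Suc_right:
  assumes j: "1 \<le> j" "j < k" and m: "poly (T_poly j) m = 0" "0 \<le> poly (T_poly (j - 1)) m"
  obtains y where "m \<le> y" "poly (T_poly (j + 1)) y = 0"
proof -
  have "poly (T_poly (j + 1)) m = - ((1 - \<alpha>)^2 * children_count d k (j + 1) * poly (T_poly (j - 1)) m)"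
    using T_poly_recurrence[OF j] m(1) by simp
  also have "\<dots> \<le> 0"
    using children_count_nonneg[of "j + 1"] j m(2) by simp
  finally consider "poly (T_poly (j + 1)) m = 0" | "poly (T_poly (j + 1)) m < 0"
    by linarith
  then show ?thesis
  proof cases
    case 1
    then show ?thesis
      using that by blast
  next
    case 2
    then obtain z where "m < z" "poly (T_poly (j + 1)) z = 0"
      using poly_root_right_of_negative[of "T_poly (j + 1)" m] lead_coeff_T_poly by auto
    then show ?thesis
      using that less_imp_le by blast
  qed
qed

text \<open>Inductively, T_poly (j - 1) is nonnegative at the largest root of T_poly j; the recurrence
  then makes T_poly (j + 1) nonpositive there, so the largest roots increase with j.\<close>

lemma largest_root_T_poly:
  assumes "1 \<le> j" "j \<le> k"
  shows "poly (T_poly j) (largest_root (T_poly j)) = 0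
    \<and> 0 \<le> poly (T_poly (j - 1)) (largest_root (T_poly j))"
  using assms
proof (induction j rule: nat_induct_at_least)
  case base
  have "poly (T_poly 1) \<alpha> = 0"
    using roots_T_poly_1 by blast
  then show ?case
    using roots_T_poly_1 poly_T_poly_0 by (simp add: largest_root_def)
next
  case (Suc j)
  define m where "m = largest_root (T_poly j)"
  have "poly (T_poly j) m = 0" "0 \<le> poly (T_poly (j - 1)) m"
    using Suc.IH Suc.prems unfolding m_def by simp_all
  then obtain y where y: "m \<le> y" "poly (T_poly (j + 1)) y = 0"
    using root_T_poly_Suc_right[of j m] Suc.hyps Suc.prems by auto
  then have "m \<le> largest_root (T_poly (Suc j))"
    using root_le_largest_root[OF T_poly_nonzero y(2)] by simp
  then have "0 \<le> poly (T_poly j) (largest_root (T_poly (Suc j)))"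
    using poly_nonneg_right_of_largest_root lead_coeff_T_poly unfolding m_def by simp
  moreover have "poly (T_poly (Suc j)) (largest_root (T_poly (Suc j))) = 0"
    using y(2) poly_largest_root[OF T_poly_nonzero] by simp
  ultimately show ?case
    by simp
qed

lemma largest_root_T_poly_mono:
  assumes "1 \<le> j" "j \<le> m" "m \<le> k"
  shows "largest_root (T_poly j) \<le> largest_root (T_poly m)"
  using assms(2,3)
proof (induction m rule: dec_induct)
  case (step i)
  obtain y where y: "largest_root (T_poly i) \<le> y" "poly (T_poly (i + 1)) y = 0"
    using root_T_poly_Suc_right[of i] largest_root_T_poly[of i] step assms(1) by auto
  then show ?case
    using step root_le_largest_root[OF T_poly_nonzero y(2)] by simp
qed simp

lemma roots_char_poly_A_alpha:
  assumes "poly (char_poly (A_alpha \<alpha> N E)) x = 0"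
  obtains j where "j \<in> {1..k}" "poly (T_poly j) x = 0"
proof -
  have "(\<exists>j \<in> {1..k - 1}. poly (T_poly j) x = 0) \<or> poly (T_poly k) x = 0"
    using assms unfolding char_poly_A_alpha by (auto simp: poly_prod prod_zero_iff)
  then show ?thesis
  proof (elim disjE bexE)
    fix j assume "j \<in> {1..k - 1}" "poly (T_poly j) x = 0"
    moreover from this(1) have "j \<in> {1..k}"
      by (meson atLeastAtMost_iff diff_le_self order_trans)
    ultimately show ?thesis
      using that by blast
  next
    assume "poly (T_poly k) x = 0"
    then show ?thesis
      using that[of k] two_le_height by simp
  qed
qed

lemma max_eigenvalue_A_alpha:
  "Max {x. eigenvalue (T_mat \<alpha> d k k) x} = Max {x. eigenvalue (A_alpha \<alpha> N E) x}"
proof -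
  define X where "X = {x. poly (char_poly (A_alpha \<alpha> N E)) x = 0}"
  have "finite X"
    unfolding X_def using degree_monic_char_poly[OF A_alpha_carrier[of \<alpha> N E]]
    by (intro poly_roots_finite) auto
  moreover have "largest_root (T_poly k) \<in> X"
    using largest_root_T_poly[of k] two_le_height unfolding X_def char_poly_A_alpha by simp
  moreover have "x \<le> largest_root (T_poly k)" if "x \<in> X" for x
  proof -
    obtain j where "j \<in> {1..k}" "poly (T_poly j) x = 0"
      using roots_char_poly_A_alpha \<open>x \<in> X\<close> unfolding X_def by blast
    then have "x \<le> largest_root (T_poly j)"
      using root_le_largest_root[OF T_poly_nonzero] by blast
    also have "\<dots> \<le> largest_root (T_poly k)"
      using largest_root_T_poly_mono[of j k] \<open>j \<in> {1..k}\<close> by simp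
    finally show ?thesis .
  qed
  ultimately have "Max X = largest_root (T_poly k)"
    by (intro Max_eqI)
  then show ?thesis
    using eigenvalues_eq_roots_char_poly[OF A_alpha_carrier]
      eigenvalues_eq_roots_char_poly[OF T_mat_carrier]
    unfolding X_def T_poly_def largest_root_def by simp
qed

end

theorem theorem6:
  fixes N :: nat and E :: "nat \<Rightarrow> nat \<Rightarrow> bool" and r k :: nat
    and n d :: "nat \<Rightarrow> nat" and \<alpha> :: real
  assumes bethe: "gen_bethe_tree N E r k"
    and k2: "k \<ge> 2"
    and n_def: "\<forall>j\<in>{1..k}. n j = card {v. v < N \<and> level E r v = k - j + 1}"
    and d_def: "\<forall>j\<in>{1..k}. \<forall>v<N. level E r v = k - j + 1 \<longrightarrow> degree N E v = d j"
    and alpha: "0 \<le> \<alpha>" "\<alpha> < 1"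
  shows "spectrum_mset (A_alpha \<alpha> N E) =
           (\<Sum>j\<in>{1..k-1}. repeat_mset (n j - n (j + 1)) (spectrum_mset (T_mat \<alpha> d k j)))
           + spectrum_mset (T_mat \<alpha> d k k)
         \<and> Max {x. eigenvalue (T_mat \<alpha> d k k) x} = Max {x. eigenvalue (A_alpha \<alpha> N E) x}"
proof -
  interpret bethe_tree N E r k n d \<alpha>
    using bethe k2 n_def d_def unfolding gen_bethe_tree_def by unfold_locales blast+
  show ?thesis
    using spectrum_mset_A_alpha max_eigenvalue_A_alpha by blast
qed

end
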